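(* Let $\{E_i:i\in\Lambda\}$ be a family of commuting projections in a $C^*$-algebra, let $\mathcal A:=C^*(\{E_i:i\in\Lambda\})$, and let $X$ be the spectrum of $\mathcal A$, identifying $\mathcal A$ with $C_0(X)$ via the Gelfand transform. Then $C_0(X;\mathbb Z)$ equals the ring generated by $\{E_i:i\in\Lambda\}$. If moreover the family $\{E_i\}$ is closed under multiplication, then $C_0(X;\mathbb Z)=\operatorname{span}_{\mathbb Z}\{E_i:i\in\Lambda\}$.
   Context: $C_0(X;\mathbb Z)$ denotes the continuous integer-valued functions on $X$ vanishing at infinity. The ring generated by the $E_i$ means the (not necessarily unital) subring generated by them. *)

theory Defs
  imports "HOL-Analysis.Analysis"
begin

text \<open>The carrier is a real Banach
algebra (type class), enriched by a complex scalar multiplication cs extending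
the real one, and an involution adj satisfying the C*-identity.\<close>

definition is_cstar_algebra ::
  "('a::{real_normed_algebra,banach} \<Rightarrow> 'a) \<Rightarrow> (complex \<Rightarrow> 'a \<Rightarrow> 'a) \<Rightarrow> bool" where
  "is_cstar_algebra adj cs \<longleftrightarrow>
     (\<forall>r x. cs (complex_of_real r) x = scaleR r x) \<and>
     (\<forall>a b x. cs (a + b) x = cs a x + cs b x) \<and>
     (\<forall>a x y. cs a (x + y) = cs a x + cs a y) \<and>
     (\<forall>a b x. cs (a * b) x = cs a (cs b x)) \<and>
     (\<forall>a x y. cs a (x * y) = cs a x * y \<and> cs a (x * y) = x * cs a y) \<and>
     (\<forall>a x. norm (cs a x) = cmod a * norm x) \<and>
     (\<forall>x y. adj (x + y) = adj x + adj y) \<and>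
     (\<forall>a x. adj (cs a x) = cs (cnj a) (adj x)) \<and>
     (\<forall>x y. adj (x * y) = adj y * adj x) \<and>
     (\<forall>x. adj (adj x) = x) \<and>
     (\<forall>x. norm (adj x * x) = (norm x)\<^sup>2)"

definition is_projection :: "('a::real_normed_algebra \<Rightarrow> 'a) \<Rightarrow> 'a \<Rightarrow> bool" where
  "is_projection adj p \<longleftrightarrow> adj p = p \<and> p * p = p"

definition is_cstar_subalgebra ::
  "('a::real_normed_algebra \<Rightarrow> 'a) \<Rightarrow> (complex \<Rightarrow> 'a \<Rightarrow> 'a) \<Rightarrow> 'a set \<Rightarrow> bool" where
  "is_cstar_subalgebra adj cs B \<longleftrightarrow>
     closed B \<and> 0 \<in> B \<and>
     (\<forall>x\<in>B. \<forall>y\<in>B. x + y \<in> B \<and> x * y \<in> B) \<and>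
     (\<forall>a. \<forall>x\<in>B. cs a x \<in> B) \<and> (\<forall>x\<in>B. adj x \<in> B)"

definition cstar_gen ::
  "('a::real_normed_algebra \<Rightarrow> 'a) \<Rightarrow> (complex \<Rightarrow> 'a \<Rightarrow> 'a) \<Rightarrow> 'a set \<Rightarrow> 'a set" where
  "cstar_gen adj cs S = \<Inter>{B. is_cstar_subalgebra adj cs B \<and> S \<subseteq> B}"

text \<open>Carrying the product topology of 'a => complex, the subspace topology on this set
is the weak* topology.\<close>
definition characters ::
  "(complex \<Rightarrow> 'a \<Rightarrow> 'a) \<Rightarrow> 'a::real_normed_algebra set \<Rightarrow> ('a \<Rightarrow> complex) set" where
  "characters cs A = {\<phi>.
     (\<forall>x\<in>A. \<forall>y\<in>A. \<phi> (x + y) = \<phi> x + \<phi> y \<and> \<phi> (x * y) = \<phi> x * \<phi> y) \<and>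
     (\<forall>a. \<forall>x\<in>A. \<phi> (cs a x) = a * \<phi> x) \<and>
     (\<exists>x\<in>A. \<phi> x \<noteq> 0) \<and>
     (\<forall>x. x \<notin> A \<longrightarrow> \<phi> x = 0)}"

definition gelfand :: "('a \<Rightarrow> complex) set \<Rightarrow> 'a \<Rightarrow> ('a \<Rightarrow> complex) \<Rightarrow> complex" where
  "gelfand X a = (\<lambda>\<phi>. if \<phi> \<in> X then \<phi> a else 0)"

definition C0_int :: "'b::topological_space set \<Rightarrow> ('b \<Rightarrow> complex) set" where
  "C0_int X = {f. continuous_on X f \<and>
                  (\<forall>e>0. compact {x\<in>X. norm (f x) \<ge> e}) \<and>
                  (\<forall>x\<in>X. f x \<in> \<int>) \<and>
                  (\<forall>x. x \<notin> X \<longrightarrow> f x = 0)}"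

definition ring_gen :: "'a::ring set \<Rightarrow> 'a set" where
  "ring_gen S = \<Inter>{R. S \<subseteq> R \<and> 0 \<in> R \<and>
        (\<forall>x\<in>R. \<forall>y\<in>R. x + y \<in> R \<and> - x \<in> R \<and> x * y \<in> R)}"

definition int_span :: "('i \<Rightarrow> 'a::real_vector) \<Rightarrow> 'i set \<Rightarrow> 'a set" where
  "int_span E I = {\<Sum>i\<in>F. scaleR (real_of_int (c i)) (E i) | F c. finite F \<and> F \<subseteq> I}"

end

theory Submission
  imports Defs "HOL-Library.Function_Algebras"
begin

text \<open>Characters are multiplicative, so they take only the values 0 and 1 on projections; hence the
  Gelfand transform of a projection \<open>p\<close> is the indicator of \<open>U\<^sub>p = {\<phi>. \<phi> p = 1}\<close>, and the Gelfand
  transform maps the ring generated by the projections onto the ring generated by these indicators.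
  Those functions are integer valued and, like every Gelfand transform, lie in \<open>C\<^sub>0(X)\<close>.

  Conversely, the elements of \<open>\<A>\<close> on which a character is determined, up to any \<open>\<epsilon> > 0\<close>, by its
  values on finitely many projections form a closed *-subalgebra containing the projections, hence
  all of \<open>\<A>\<close>. Therefore each character lies in some \<open>U\<^sub>p\<close>, and the Boolean combinations of finitely
  many \<open>U\<^sub>p\<close> form a neighbourhood basis of \<open>X\<close>. By compactness every compact open subset of \<open>X\<close> is a
  finite union of sets \<open>U\<^sub>p \<inter> (Boolean combination)\<close>, whose indicators lie in the ring. Finally,
  a function in \<open>C\<^sub>0(X;\<int>)\<close> takes finitely many values, with compact open level sets, so it is an
  integer combination of such indicators. If the family is closed under products, the ring it
  generates is its \<open>\<int>\<close>-span.\<close>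

subsection \<open>Generated subrings and integer spans\<close>

lemma ring_gen_minimal:
  assumes "S \<subseteq> R" "0 \<in> R" "\<And>x y. x \<in> R \<Longrightarrow> y \<in> R \<Longrightarrow> x + y \<in> R"
    "\<And>x. x \<in> R \<Longrightarrow> - x \<in> R" "\<And>x y. x \<in> R \<Longrightarrow> y \<in> R \<Longrightarrow> x * y \<in> R"
  shows "ring_gen S \<subseteq> R"
  unfolding ring_gen_def by (rule Inter_lower) (simp add: assms)

lemma ring_gen_superset: "S \<subseteq> ring_gen S"
  unfolding ring_gen_def by (rule Inter_greatest) simp

lemma ring_gen_0 [simp]: "0 \<in> ring_gen S"
  and ring_gen_add: "x \<in> ring_gen S \<Longrightarrow> y \<in> ring_gen S \<Longrightarrow> x + y \<in> ring_gen S"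
  and ring_gen_mult: "x \<in> ring_gen S \<Longrightarrow> y \<in> ring_gen S \<Longrightarrow> x * y \<in> ring_gen S"
  unfolding ring_gen_def by simp_all

lemma ring_gen_uminus: "x \<in> ring_gen S \<Longrightarrow> - x \<in> ring_gen S"
  unfolding ring_gen_def by (auto simp: Ball_def)

lemma ring_gen_diff: "x \<in> ring_gen S \<Longrightarrow> y \<in> ring_gen S \<Longrightarrow> x - y \<in> ring_gen S"
  by (metis diff_conv_add_uminus ring_gen_add ring_gen_uminus)

lemma ring_gen_induct [consumes 1, case_names base zero add uminus mult]:
  assumes "x \<in> ring_gen S"
    and "\<And>s. s \<in> S \<Longrightarrow> P s" "P 0"
    and "\<And>x y. x \<in> ring_gen S \<Longrightarrow> y \<in> ring_gen S \<Longrightarrow> P x \<Longrightarrow> P y \<Longrightarrow> P (x + y)"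
    and "\<And>x. x \<in> ring_gen S \<Longrightarrow> P x \<Longrightarrow> P (- x)"
    and "\<And>x y. x \<in> ring_gen S \<Longrightarrow> y \<in> ring_gen S \<Longrightarrow> P x \<Longrightarrow> P y \<Longrightarrow> P (x * y)"
  shows "P x"
proof -
  have "ring_gen S \<subseteq> {x \<in> ring_gen S. P x}"
  proof (rule ring_gen_minimal)
    show "S \<subseteq> {x \<in> ring_gen S. P x}" using assms(2) ring_gen_superset by blast
    show "0 \<in> {x \<in> ring_gen S. P x}" using assms(3) by simp
  next
    fix x y assume "x \<in> {x \<in> ring_gen S. P x}" "y \<in> {x \<in> ring_gen S. P x}"
    then show "x + y \<in> {x \<in> ring_gen S. P x}" "x * y \<in> {x \<in> ring_gen S. P x}"
      using assms(4,6) by (simp_all add: ring_gen_add ring_gen_mult)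
  next
    fix x assume "x \<in> {x \<in> ring_gen S. P x}"
    then show "- x \<in> {x \<in> ring_gen S. P x}" using assms(5) by (simp add: ring_gen_uminus)
  qed
  then show ?thesis using assms(1) by blast
qed

lemma ring_gen_sum: "(\<And>i. i \<in> F \<Longrightarrow> g i \<in> ring_gen S) \<Longrightarrow> sum g F \<in> ring_gen S"
proof (induction F rule: infinite_finite_induct)
  case (insert i F)
  then show ?case by (simp add: ring_gen_add)
qed simp_all

lemma ring_gen_scaleR_of_int:
  fixes x :: "'a::real_algebra"
  assumes "x \<in> ring_gen S"
  shows "real_of_int k *\<^sub>R x \<in> ring_gen S"
proof (induction k rule: int_induct[where k = 0])
  case (step1 i)
  then show ?case using ring_gen_add[OF _ assms] by (simp add: scaleR_add_left)
next
  case (step2 i)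
  then show ?case using ring_gen_diff[OF _ assms] by (simp add: scaleR_diff_left)
qed simp

lemma ring_gen_of_int_mult:
  fixes x :: "'a::ring_1"
  assumes "x \<in> ring_gen S"
  shows "of_int k * x \<in> ring_gen S"
proof (induction k rule: int_induct[where k = 0])
  case (step1 i)
  then show ?case using ring_gen_add[OF _ assms] by (simp add: distrib_right)
next
  case (step2 i)
  then show ?case using ring_gen_diff[OF _ assms] by (simp add: left_diff_distrib)
qed simp

lemma ring_gen_image:
  assumes sub: "ring_gen S \<subseteq> B"
    and hom: "\<And>x y. x \<in> B \<Longrightarrow> y \<in> B \<Longrightarrow> h (x + y) = h x + h y \<and> h (x * y) = h x * h y"
  shows "h ` ring_gen S = ring_gen (h ` S)"
proof
  have h0: "h 0 = 0"
    using hom[of 0 0] sub by (metis add_cancel_right_right ring_gen_0 subsetD)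
  have h_uminus: "h (- x) = - h x" if "x \<in> ring_gen S" for x
  proof -
    have "x \<in> B" "- x \<in> B" using that sub ring_gen_uminus by auto
    then have "h x + h (- x) = 0" using hom[of x "- x"] h0 by simp
    then show ?thesis by (rule add.inverse_unique[symmetric])
  qed
  show "h ` ring_gen S \<subseteq> ring_gen (h ` S)"
  proof (rule image_subsetI)
    fix x assume "x \<in> ring_gen S"
    then show "h x \<in> ring_gen (h ` S)"
    proof (induction rule: ring_gen_induct)
      case (base s)
      then show ?case using ring_gen_superset[of "h ` S"] by blast
    next
      case (add x y)
      then have "x \<in> B" "y \<in> B" using sub by auto
      then show ?case using hom[of x y] add(3,4) by (simp add: ring_gen_add)
    next
      case (uminus x)
      then show ?case by (simp add: h_uminus ring_gen_uminus)
    next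
      case (mult x y)
      then have "x \<in> B" "y \<in> B" using sub by auto
      then show ?case using hom[of x y] mult(3,4) by (simp add: ring_gen_mult)
    qed (simp add: h0)
  qed
  show "ring_gen (h ` S) \<subseteq> h ` ring_gen S"
  proof (rule ring_gen_minimal)
    show "h ` S \<subseteq> h ` ring_gen S" using ring_gen_superset by blast
    show "0 \<in> h ` ring_gen S" using h0 by (simp add: rev_image_eqI)
  next
    fix u v assume "u \<in> h ` ring_gen S" "v \<in> h ` ring_gen S"
    then obtain x y where xy: "x \<in> ring_gen S" "y \<in> ring_gen S" and uv: "u = h x" "v = h y"
      by blast
    then have "x \<in> B" "y \<in> B" using sub by auto
    then show "u + v \<in> h ` ring_gen S" "u * v \<in> h ` ring_gen S"
      using hom[of x y] uv
      by (auto intro: rev_image_eqI[OF ring_gen_add[OF xy]] rev_image_eqI[OF ring_gen_mult[OF xy]])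
    show "- u \<in> h ` ring_gen S"
      using h_uminus[OF xy(1)] uv by (auto intro: rev_image_eqI[OF ring_gen_uminus[OF xy(1)]])
  qed
qed

lemma int_spanI: "finite F \<Longrightarrow> F \<subseteq> I \<Longrightarrow> (\<Sum>i\<in>F. real_of_int (c i) *\<^sub>R E i) \<in> int_span E I"
  unfolding int_span_def by blast

lemma int_spanE:
  assumes "x \<in> int_span E I"
  obtains F c where "finite F" "F \<subseteq> I" "x = (\<Sum>i\<in>F. real_of_int (c i) *\<^sub>R E i)"
  using assms unfolding int_span_def by blast

lemma int_span_superset: "i \<in> I \<Longrightarrow> E i \<in> int_span E I"
  using int_spanI[of "{i}" I "\<lambda>_. 1" E] by simp

lemma int_span_0: "0 \<in> int_span E I"
  using int_spanI[of "{}" I _ E] by simp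

lemma int_span_add:
  assumes "x \<in> int_span E I" "y \<in> int_span E I"
  shows "x + y \<in> int_span E I"
proof -
  obtain F c where x: "finite F" "F \<subseteq> I" "x = (\<Sum>i\<in>F. real_of_int (c i) *\<^sub>R E i)"
    using assms(1) by (rule int_spanE)
  obtain G d where y: "finite G" "G \<subseteq> I" "y = (\<Sum>i\<in>G. real_of_int (d i) *\<^sub>R E i)"
    using assms(2) by (rule int_spanE)
  define c' where "c' i = (if i \<in> F then c i else 0)" for i
  define d' where "d' i = (if i \<in> G then d i else 0)" for i
  have "x = (\<Sum>i\<in>F \<union> G. real_of_int (c' i) *\<^sub>R E i)"
    unfolding x(3) c'_def using x(1) y(1) by (intro sum.mono_neutral_cong_left) auto
  moreover have "y = (\<Sum>i\<in>F \<union> G. real_of_int (d' i) *\<^sub>R E i)"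
    unfolding y(3) d'_def using x(1) y(1) by (intro sum.mono_neutral_cong_left) auto
  ultimately have "x + y = (\<Sum>i\<in>F \<union> G. real_of_int (c' i + d' i) *\<^sub>R E i)"
    by (simp add: sum.distrib scaleR_add_left)
  moreover have "(\<Sum>i\<in>F \<union> G. real_of_int (c' i + d' i) *\<^sub>R E i) \<in> int_span E I"
    using x(1,2) y(1,2) by (intro int_spanI) auto
  ultimately show ?thesis by (simp only:)
qed

lemma int_span_scaleR_of_int:
  assumes "x \<in> int_span E I"
  shows "real_of_int k *\<^sub>R x \<in> int_span E I"
proof -
  obtain F c where x: "finite F" "F \<subseteq> I" "x = (\<Sum>i\<in>F. real_of_int (c i) *\<^sub>R E i)"
    using assms by (rule int_spanE)
  then have "real_of_int k *\<^sub>R x = (\<Sum>i\<in>F. real_of_int (k * c i) *\<^sub>R E i)"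
    by (simp add: scaleR_sum_right)
  with int_spanI[OF x(1,2)] show ?thesis by (simp only:)
qed

lemma int_span_uminus: "x \<in> int_span E I \<Longrightarrow> - x \<in> int_span E I"
  using int_span_scaleR_of_int[of x E I "-1"] by simp

lemma int_span_sum: "(\<And>i. i \<in> F \<Longrightarrow> g i \<in> int_span E I) \<Longrightarrow> sum g F \<in> int_span E I"
proof (induction F rule: infinite_finite_induct)
  case (insert i F)
  then show ?case by (simp add: int_span_add)
qed (simp_all add: int_span_0)

lemma int_span_mult:
  fixes E :: "'i \<Rightarrow> 'a::real_algebra"
  assumes closed: "\<forall>i\<in>I. \<forall>j\<in>I. \<exists>k\<in>I. E i * E j = E k"
    and "x \<in> int_span E I" "y \<in> int_span E I"
  shows "x * y \<in> int_span E I"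
proof -
  obtain F c where x: "finite F" "F \<subseteq> I" "x = (\<Sum>i\<in>F. real_of_int (c i) *\<^sub>R E i)"
    using assms(2) by (rule int_spanE)
  obtain G d where y: "finite G" "G \<subseteq> I" "y = (\<Sum>j\<in>G. real_of_int (d j) *\<^sub>R E j)"
    using assms(3) by (rule int_spanE)
  have "x * y = (\<Sum>i\<in>F. \<Sum>j\<in>G. real_of_int (c i * d j) *\<^sub>R (E i * E j))"
    unfolding x(3) y(3) sum_product by (simp add: mult.commute)
  also have "\<dots> \<in> int_span E I"
  proof (intro int_span_sum)
    fix i j assume "i \<in> F" "j \<in> G"
    then obtain k where "k \<in> I" "E i * E j = E k" using closed x(2) y(2) by blast
    then show "real_of_int (c i * d j) *\<^sub>R (E i * E j) \<in> int_span E I"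
      by (metis int_span_scaleR_of_int int_span_superset)
  qed
  finally show ?thesis .
qed

lemma ring_gen_eq_int_span:
  fixes E :: "'i \<Rightarrow> 'a::real_algebra"
  assumes "\<forall>i\<in>I. \<forall>j\<in>I. \<exists>k\<in>I. E i * E j = E k"
  shows "ring_gen (E ` I) = int_span E I"
proof
  show "ring_gen (E ` I) \<subseteq> int_span E I"
    by (rule ring_gen_minimal)
      (auto intro: int_span_superset int_span_0 int_span_add int_span_uminus int_span_mult[OF assms])
  show "int_span E I \<subseteq> ring_gen (E ` I)"
  proof
    fix x assume "x \<in> int_span E I"
    then obtain F c where x: "finite F" "F \<subseteq> I" "x = (\<Sum>i\<in>F. real_of_int (c i) *\<^sub>R E i)"
      by (rule int_spanE)
    have "E i \<in> ring_gen (E ` I)" if "i \<in> F" for i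
      using that x(2) ring_gen_superset by blast
    then show "x \<in> ring_gen (E ` I)"
      unfolding x(3) by (intro ring_gen_sum ring_gen_scaleR_of_int)
  qed
qed

subsection \<open>Integer-valued functions vanishing at infinity\<close>

lemma C0_int_finite_range:
  assumes "f \<in> C0_int X"
  shows "finite (f ` X)"
proof -
  have cont: "continuous_on X f" and int: "\<And>x. x \<in> X \<Longrightarrow> f x \<in> \<int>"
    and "compact {x \<in> X. norm (f x) \<ge> 1}"
    using assms unfolding C0_int_def by auto
  then have "bounded (f ` {x \<in> X. norm (f x) \<ge> 1})"
    by (auto intro: compact_imp_bounded compact_continuous_image continuous_on_subset)
  then obtain B where "B > 0" "\<forall>z \<in> f ` {x \<in> X. norm (f x) \<ge> 1}. norm z \<le> B"
    unfolding bounded_pos by blast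
  then have B: "\<And>x. x \<in> X \<Longrightarrow> norm (f x) \<ge> 1 \<Longrightarrow> norm (f x) \<le> B" by blast
  have "f ` X \<subseteq> of_int ` {-\<lceil>B\<rceil>..\<lceil>B\<rceil>}"
  proof
    fix z assume "z \<in> f ` X"
    then obtain x k where x: "x \<in> X" "z = f x" "f x = of_int k"
      using int by (metis Ints_cases imageE)
    have "\<bar>real_of_int k\<bar> \<le> B \<or> k = 0"
      using B[OF x(1)] x(3) by (cases "k = 0") auto
    then have "\<bar>k\<bar> \<le> \<lceil>B\<rceil>"
      using le_of_int_ceiling[of B] \<open>B > 0\<close> by (auto simp: le_ceiling_iff)
    then show "z \<in> of_int ` {-\<lceil>B\<rceil>..\<lceil>B\<rceil>}"
      using x by (auto simp: abs_le_iff)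
  qed
  then show ?thesis by (rule finite_subset) simp
qed

lemma openin_C0_int_level_set:
  assumes "f \<in> C0_int X"
  shows "openin (top_of_set X) {x \<in> X. f x = c}"
proof -
  have "open (- (f ` X - {c}))"
    using C0_int_finite_range[OF assms] by (intro open_Compl finite_imp_closed) simp
  then have "openin (top_of_set X) (X \<inter> f -` (- (f ` X - {c})))"
    using assms unfolding C0_int_def by (intro continuous_openin_preimage_gen) auto
  moreover have "X \<inter> f -` (- (f ` X - {c})) = {x \<in> X. f x = c}" by auto
  ultimately show ?thesis by simp
qed

lemma compact_C0_int_level_set:
  assumes "f \<in> C0_int X" "c \<noteq> 0"
  shows "compact {x \<in> X. f x = c}"
proof -
  define K where "K = {x \<in> X. norm (f x) \<ge> norm c}"
  have "compact K" "continuous_on K f"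
    using assms unfolding C0_int_def K_def by (auto intro: continuous_on_subset)
  moreover have "K \<inter> f -` {c} = {x \<in> X. f x = c}"
    unfolding K_def by auto
  ultimately show ?thesis
    by (metis closed_singleton closedin_compact continuous_closedin_preimage)
qed

lemma of_int_fun_apply: "(of_int k :: 'b \<Rightarrow> 'c::ring_1) x = of_int k"
  by (induction k rule: int_induct[where k = 0]) simp_all

lemma sum_fun_apply: "sum f A x = (\<Sum>a\<in>A. f a x)"
  by (induction A rule: infinite_finite_induct) simp_all

lemma C0_int_level_set_expansion:
  assumes "f \<in> C0_int X"
  shows "f = (\<Sum>k \<in> of_int -` (f ` X - {0}). of_int k * indicator {x \<in> X. f x = of_int k})"
    (is "f = (\<Sum>k\<in>?N. ?g k)")
proof
  fix x
  have int: "\<And>x. x \<in> X \<Longrightarrow> f x \<in> \<int>" and out: "\<And>x. x \<notin> X \<Longrightarrow> f x = 0"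
    using assms unfolding C0_int_def by auto
  have "finite ?N"
    using C0_int_finite_range[OF assms] by (intro finite_vimageI) (auto simp: inj_on_def)
  show "f x = (\<Sum>k\<in>?N. ?g k) x"
  proof (cases "x \<in> X \<and> f x \<noteq> 0")
    case True
    then obtain m where m: "f x = of_int m"
      using int by (auto elim: Ints_cases)
    with True have "m \<in> ?N" by (auto intro: rev_image_eqI)
    have "(\<Sum>k\<in>?N. ?g k) x = (\<Sum>k\<in>?N. if k = m then of_int m else 0)"
      unfolding sum_fun_apply using True m by (intro sum.cong) (auto simp: of_int_fun_apply)
    also have "\<dots> = f x"
      using \<open>finite ?N\<close> \<open>m \<in> ?N\<close> m by simp
    finally show ?thesis ..
  next
    case False
    then have "(\<Sum>k\<in>?N. ?g k) x = 0"
      unfolding sum_fun_apply by (intro sum.neutral) auto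
    with False out show ?thesis by auto
  qed
qed

definition cylinder :: "'b set \<Rightarrow> 'b set set \<Rightarrow> 'b set set \<Rightarrow> 'b set" where
  "cylinder U F G = {x \<in> U. \<forall>V\<in>F. x \<in> V \<longleftrightarrow> V \<in> G}"

lemma cylinder_empty [simp]: "cylinder U {} G = U"
  unfolding cylinder_def by simp

lemma cylinder_insert:
  "cylinder U (insert V F) G = (if V \<in> G then cylinder U F G \<inter> V else cylinder U F G - V)"
  unfolding cylinder_def by auto

lemma openin_cylinder:
  assumes "openin T U" "finite F" "\<And>V. V \<in> F \<Longrightarrow> openin T V \<and> closedin T V"
  shows "openin T (cylinder U F G)"
  using assms(2,3)
proof (induction F rule: finite_induct)
  case (insert V F)
  then show ?case by (simp add: cylinder_insert openin_Int openin_diff)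
qed (simp add: assms(1))

lemma indicator_cylinder_in_ring_gen:
  assumes "U \<in> \<U>" "finite F" "F \<subseteq> \<U>"
  shows "indicator (cylinder U F G) \<in> ring_gen (indicator ` \<U> :: ('b \<Rightarrow> 'c::ring_1) set)"
  using assms(2,3)
proof (induction F rule: finite_induct)
  case empty
  then show ?case
    using assms(1) ring_gen_superset[of "indicator ` \<U> :: ('b \<Rightarrow> 'c) set"] by auto
next
  case (insert V F)
  let ?R = "ring_gen (indicator ` \<U> :: ('b \<Rightarrow> 'c) set)"
  have ind: "indicator (cylinder U F G) \<in> ?R" "indicator V \<in> ?R"
    using insert ring_gen_superset[of "indicator ` \<U> :: ('b \<Rightarrow> 'c) set"] by auto
  have "indicator (cylinder U F G \<inter> V) = indicator (cylinder U F G) * (indicator V :: 'b \<Rightarrow> 'c)"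
    "indicator (cylinder U F G - V) =
       indicator (cylinder U F G) - indicator (cylinder U F G) * (indicator V :: 'b \<Rightarrow> 'c)"
    by (auto simp: fun_eq_iff indicator_def)
  with ind show ?case
    unfolding cylinder_insert by (simp only: ring_gen_mult ring_gen_diff split: if_split) simp
qed

lemma indicator_Union_in_ring_gen:
  assumes "finite \<W>" "\<And>W. W \<in> \<W> \<Longrightarrow> indicator W \<in> ring_gen (R :: ('b \<Rightarrow> 'c::ring_1) set)"
  shows "indicator (\<Union>\<W>) \<in> ring_gen R"
  using assms
proof (induction \<W> rule: finite_induct)
  case empty
  have "indicator {} = (0 :: 'b \<Rightarrow> 'c)" by (rule ext) simp
  then show ?case by (simp only: Union_empty ring_gen_0)
next
  case (insert W \<W>)
  have "indicator W + indicator (\<Union>\<W>) - indicator W * indicator (\<Union>\<W>) \<in> ring_gen R"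
    using insert by (intro ring_gen_diff ring_gen_add ring_gen_mult) auto
  moreover have "indicator (\<Union>(insert W \<W>)) =
      indicator W + indicator (\<Union>\<W>) - indicator W * (indicator (\<Union>\<W>) :: 'b \<Rightarrow> 'c)"
    by (auto simp: fun_eq_iff indicator_def)
  ultimately show ?case by (simp only:)
qed

lemma ring_gen_indicator_Ints:
  assumes "f \<in> ring_gen (indicator ` \<U> :: ('b \<Rightarrow> 'c::ring_1) set)"
  shows "f x \<in> \<int>"
proof -
  have "ring_gen (indicator ` \<U> :: ('b \<Rightarrow> 'c) set) \<subseteq> {f. \<forall>x. f x \<in> \<int>}"
    by (rule ring_gen_minimal) (auto simp: indicator_def)
  then show ?thesis using assms by blast
qed

lemma indicator_compact_openin_in_ring_gen:
  fixes X :: "'b::topological_space set"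
  assumes clopen: "\<And>U. U \<in> \<U> \<Longrightarrow> openin (top_of_set X) U \<and> closedin (top_of_set X) U"
    and cover: "X \<subseteq> \<Union>\<U>"
    and nhds: "\<And>x T. x \<in> X \<Longrightarrow> open T \<Longrightarrow> x \<in> T \<Longrightarrow>
      \<exists>F. finite F \<and> F \<subseteq> \<U> \<and> cylinder X F {V. x \<in> V} \<subseteq> T"
    and "compact K" "openin (top_of_set X) K"
  shows "indicator K \<in> ring_gen (indicator ` \<U> :: ('b \<Rightarrow> 'c::ring_1) set)"
proof -
  obtain T where T: "open T" "K = X \<inter> T"
    using \<open>openin (top_of_set X) K\<close> openin_open by blast
  have "\<exists>U F. U \<in> \<U> \<and> x \<in> U \<and> finite F \<and> F \<subseteq> \<U> \<and> cylinder X F {V. x \<in> V} \<subseteq> T"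
    if "x \<in> K" for x
    using that T cover nhds[of x T] by blast
  then obtain U F where UF: "\<And>x. x \<in> K \<Longrightarrow>
      U x \<in> \<U> \<and> x \<in> U x \<and> finite (F x) \<and> F x \<subseteq> \<U> \<and> cylinder X (F x) {V. x \<in> V} \<subseteq> T"
    by metis
  define W where "W x = cylinder (U x) (F x) {V. x \<in> V}" for x
  have W_open: "openin (top_of_set X) (W x)" if "x \<in> K" for x
    unfolding W_def using UF[OF that] clopen by (intro openin_cylinder) auto
  have W_sub: "W x \<subseteq> K" if "x \<in> K" for x
    using UF[OF that] clopen[of "U x"] openin_imp_subset T(2)
    unfolding W_def cylinder_def by fastforce
  have "compactin (top_of_set X) K"
    using \<open>compact K\<close> \<open>openin (top_of_set X) K\<close> by (simp add: compactin_subtopology openin_imp_subset)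
  moreover have "K \<subseteq> \<Union>(W ` K)"
    using UF unfolding W_def cylinder_def by blast
  ultimately obtain \<W> where \<W>: "finite \<W>" "\<W> \<subseteq> W ` K" "K \<subseteq> \<Union>\<W>"
    using W_open compactinD[of "top_of_set X" K "W ` K"] by blast
  then have K: "K = \<Union>\<W>"
    using W_sub by blast
  have "indicator (W x) \<in> ring_gen (indicator ` \<U> :: ('b \<Rightarrow> 'c) set)" if "x \<in> K" for x
    unfolding W_def using UF[OF that] by (intro indicator_cylinder_in_ring_gen) auto
  then have "indicator W' \<in> ring_gen (indicator ` \<U> :: ('b \<Rightarrow> 'c) set)" if "W' \<in> \<W>" for W'
    using that \<W>(2) by blast
  then show ?thesis
    unfolding K by (rule indicator_Union_in_ring_gen[OF \<W>(1)])
qed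

lemma C0_int_subset_ring_gen_indicator:
  fixes X :: "'b::topological_space set"
  assumes clopen: "\<And>U. U \<in> \<U> \<Longrightarrow> openin (top_of_set X) U \<and> closedin (top_of_set X) U"
    and cover: "X \<subseteq> \<Union>\<U>"
    and nhds: "\<And>x T. x \<in> X \<Longrightarrow> open T \<Longrightarrow> x \<in> T \<Longrightarrow>
      \<exists>F. finite F \<and> F \<subseteq> \<U> \<and> cylinder X F {V. x \<in> V} \<subseteq> T"
  shows "C0_int X \<subseteq> ring_gen (indicator ` \<U>)"
proof
  fix f assume f: "f \<in> C0_int X"
  have "of_int k * indicator {x \<in> X. f x = of_int k} \<in> ring_gen (indicator ` \<U> :: ('b \<Rightarrow> complex) set)"
    if "k \<in> of_int -` (f ` X - {0})" for k
    using that f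
    by (intro ring_gen_of_int_mult indicator_compact_openin_in_ring_gen[OF clopen cover nhds]
        compact_C0_int_level_set openin_C0_int_level_set) auto
  then have "(\<Sum>k \<in> of_int -` (f ` X - {0}). of_int k * indicator {x \<in> X. f x = of_int k})
      \<in> ring_gen (indicator ` \<U> :: ('b \<Rightarrow> complex) set)"
    by (rule ring_gen_sum)
  then show "f \<in> ring_gen (indicator ` \<U>)"
    by (subst C0_int_level_set_expansion[OF f])
qed

subsection \<open>Multiplicative functionals and the Gelfand transform\<close>

definition multiplicative_functionals ::
  "(complex \<Rightarrow> 'a \<Rightarrow> 'a) \<Rightarrow> 'a::real_normed_algebra set \<Rightarrow> ('a \<Rightarrow> complex) set" where
  "multiplicative_functionals cs A = {\<phi>.
     (\<forall>x\<in>A. \<forall>y\<in>A. \<phi> (x + y) = \<phi> x + \<phi> y \<and> \<phi> (x * y) = \<phi> x * \<phi> y) \<and>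
     (\<forall>a. \<forall>x\<in>A. \<phi> (cs a x) = a * \<phi> x) \<and>
     (\<forall>x. x \<notin> A \<longrightarrow> \<phi> x = 0)}"

lemma characters_eq: "characters cs A = {\<phi> \<in> multiplicative_functionals cs A. \<exists>x\<in>A. \<phi> x \<noteq> 0}"
  unfolding characters_def multiplicative_functionals_def by auto

lemma multiplicative_functionalsD:
  assumes "\<phi> \<in> multiplicative_functionals cs A"
  shows "x \<in> A \<Longrightarrow> y \<in> A \<Longrightarrow> \<phi> (x + y) = \<phi> x + \<phi> y"
    and "x \<in> A \<Longrightarrow> y \<in> A \<Longrightarrow> \<phi> (x * y) = \<phi> x * \<phi> y"
    and "x \<in> A \<Longrightarrow> \<phi> (cs a x) = a * \<phi> x"
    and "x \<notin> A \<Longrightarrow> \<phi> x = 0"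
  using assms unfolding multiplicative_functionals_def by blast+

lemma zero_in_multiplicative_functionals: "(\<lambda>_. 0) \<in> multiplicative_functionals cs A"
  unfolding multiplicative_functionals_def by simp

lemma multiplicative_functional_0:
  "\<phi> \<in> multiplicative_functionals cs A \<Longrightarrow> 0 \<in> A \<Longrightarrow> \<phi> 0 = 0"
  using multiplicative_functionalsD(1)[of \<phi> cs A 0 0] by simp

lemma multiplicative_functional_idempotent:
  assumes "\<phi> \<in> multiplicative_functionals cs A" "p \<in> A" "p * p = p"
  shows "\<phi> p = 0 \<or> \<phi> p = 1"
proof -
  have "\<phi> p * \<phi> p = \<phi> p"
    using multiplicative_functionalsD(2)[OF assms(1,2,2)] assms(3) by simp
  then show ?thesis by (metis mult_cancel_left1 mult_eq_0_iff)
qed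

lemma closed_multiplicative_functionals: "closed (multiplicative_functionals cs A)"
proof -
  have "multiplicative_functionals cs A =
      (\<Inter>x\<in>A. \<Inter>y\<in>A. {\<phi>. \<phi> (x + y) = \<phi> x + \<phi> y} \<inter> {\<phi>. \<phi> (x * y) = \<phi> x * \<phi> y}) \<inter>
      (\<Inter>a. \<Inter>x\<in>A. {\<phi>. \<phi> (cs a x) = a * \<phi> x}) \<inter> (\<Inter>x\<in>-A. {\<phi>. \<phi> x = 0})"
    unfolding multiplicative_functionals_def by auto
  moreover have "closed \<dots>"
    by (intro closed_Int closed_INT ballI closed_Collect_eq continuous_intros
        continuous_on_product_coordinates)
  ultimately show ?thesis by simp
qed

lemma continuous_on_gelfand: "continuous_on X (gelfand X x)"
proof -
  have "continuous_on X (\<lambda>\<phi>. \<phi> x)"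
    by (rule continuous_on_subset[OF continuous_on_product_coordinates]) simp
  then show ?thesis
    by (rule continuous_on_cong[THEN iffD1, rotated 2]) (auto simp: gelfand_def)
qed

lemma gelfand_add_mult:
  assumes "x \<in> A" "y \<in> A"
  shows "gelfand (characters cs A) (x + y) = gelfand (characters cs A) x + gelfand (characters cs A) y"
    and "gelfand (characters cs A) (x * y) = gelfand (characters cs A) x * gelfand (characters cs A) y"
  using assms by (auto simp: fun_eq_iff gelfand_def characters_eq multiplicative_functionalsD(1,2))

lemma gelfand_idempotent:
  assumes "p \<in> A" "p * p = p"
  shows "gelfand (characters cs A) p = indicator {\<phi> \<in> characters cs A. \<phi> p = 1}"
  using multiplicative_functional_idempotent[OF _ assms]
  by (auto simp: fun_eq_iff gelfand_def indicator_def characters_eq)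

lemma
  assumes "p \<in> A" "p * p = p"
  shows openin_characters_idempotent:
      "openin (top_of_set (characters cs A)) {\<phi> \<in> characters cs A. \<phi> p = 1}"
    and closedin_characters_idempotent:
      "closedin (top_of_set (characters cs A)) {\<phi> \<in> characters cs A. \<phi> p = 1}"
proof -
  have "{\<phi> \<in> characters cs A. \<phi> p = 1} = characters cs A \<inter> {\<phi>. \<phi> p \<noteq> 0}"
    using multiplicative_functional_idempotent[OF _ assms] by (auto simp: characters_eq)
  moreover have "open {\<phi> :: 'a \<Rightarrow> complex. \<phi> p \<noteq> 0}"
    by (intro open_Collect_neq continuous_intros continuous_on_product_coordinates)
  ultimately show "openin (top_of_set (characters cs A)) {\<phi> \<in> characters cs A. \<phi> p = 1}"
    by (simp add: openin_open_Int)
  have "closed {\<phi> :: 'a \<Rightarrow> complex. \<phi> p = 1}"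
    by (intro closed_Collect_eq continuous_intros continuous_on_product_coordinates)
  then have "closedin (top_of_set (characters cs A)) (characters cs A \<inter> {\<phi>. \<phi> p = 1})"
    by (simp add: closedin_closed_Int Int_commute)
  moreover have "characters cs A \<inter> {\<phi>. \<phi> p = 1} = {\<phi> \<in> characters cs A. \<phi> p = 1}" by auto
  ultimately show "closedin (top_of_set (characters cs A)) {\<phi> \<in> characters cs A. \<phi> p = 1}"
    by simp
qed

subsection \<open>Functionals determined by finitely many generators\<close>

definition finitely_determined :: "('a \<Rightarrow> complex) set \<Rightarrow> 'a set \<Rightarrow> 'a \<Rightarrow> bool" where
  "finitely_determined M S x \<longleftrightarrow> (\<forall>e>0. \<exists>F. finite F \<and> F \<subseteq> S \<and>
     (\<forall>\<phi>\<in>M. \<forall>\<psi>\<in>M. (\<forall>s\<in>F. \<phi> s = \<psi> s) \<longrightarrow> dist (\<phi> x) (\<psi> x) \<le> e))"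

lemma finitely_determinedD:
  assumes "finitely_determined M S x" "e > 0"
  obtains F where "finite F" "F \<subseteq> S"
    "\<And>\<phi> \<psi>. \<phi> \<in> M \<Longrightarrow> \<psi> \<in> M \<Longrightarrow> \<forall>s\<in>F. \<phi> s = \<psi> s \<Longrightarrow> dist (\<phi> x) (\<psi> x) \<le> e"
  using assms unfolding finitely_determined_def by meson

lemma finitely_determined_generator: "s \<in> S \<Longrightarrow> finitely_determined M S s"
  unfolding finitely_determined_def by (auto intro!: exI[of _ "{s}"])

lemma finitely_determined_pair:
  assumes "finitely_determined M S x" "finitely_determined M S y" "e > 0"
  obtains F where "finite F" "F \<subseteq> S"
    "\<And>\<phi> \<psi>. \<phi> \<in> M \<Longrightarrow> \<psi> \<in> M \<Longrightarrow> \<forall>s\<in>F. \<phi> s = \<psi> s \<Longrightarrow>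
      dist (\<phi> x) (\<psi> x) \<le> e \<and> dist (\<phi> y) (\<psi> y) \<le> e"
proof -
  obtain F G where "finite F" "F \<subseteq> S" "finite G" "G \<subseteq> S"
    and "\<And>\<phi> \<psi>. \<phi> \<in> M \<Longrightarrow> \<psi> \<in> M \<Longrightarrow> \<forall>s\<in>F. \<phi> s = \<psi> s \<Longrightarrow> dist (\<phi> x) (\<psi> x) \<le> e"
    and "\<And>\<phi> \<psi>. \<phi> \<in> M \<Longrightarrow> \<psi> \<in> M \<Longrightarrow> \<forall>s\<in>G. \<phi> s = \<psi> s \<Longrightarrow> dist (\<phi> y) (\<psi> y) \<le> e"
    using finitely_determinedD[OF assms(1,3)] finitely_determinedD[OF assms(2,3)] by metis
  then show ?thesis by (intro that[of "F \<union> G"]) auto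
qed

lemma finitely_determined_lipschitz:
  assumes "finitely_determined M S x" "finitely_determined M S y"
    and "\<And>\<phi> \<psi>. \<phi> \<in> M \<Longrightarrow> \<psi> \<in> M \<Longrightarrow>
      dist (\<phi> z) (\<psi> z) \<le> L * (dist (\<phi> x) (\<psi> x) + dist (\<phi> y) (\<psi> y))"
  shows "finitely_determined M S z"
  unfolding finitely_determined_def
proof (intro allI impI)
  fix e :: real assume "e > 0"
  define d where "d = e / (2 * (\<bar>L\<bar> + 1))"
  have "d > 0" "\<bar>L\<bar> * (2 * d) \<le> e"
    using \<open>e > 0\<close> by (auto simp: d_def field_simps)
  obtain F where F: "finite F" "F \<subseteq> S"
    "\<And>\<phi> \<psi>. \<phi> \<in> M \<Longrightarrow> \<psi> \<in> M \<Longrightarrow> \<forall>s\<in>F. \<phi> s = \<psi> s \<Longrightarrow>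
      dist (\<phi> x) (\<psi> x) \<le> d \<and> dist (\<phi> y) (\<psi> y) \<le> d"
    using finitely_determined_pair[OF assms(1,2) \<open>d > 0\<close>] by blast
  have "dist (\<phi> z) (\<psi> z) \<le> e" if "\<phi> \<in> M" "\<psi> \<in> M" "\<forall>s\<in>F. \<phi> s = \<psi> s" for \<phi> \<psi>
  proof -
    have "dist (\<phi> z) (\<psi> z) \<le> \<bar>L\<bar> * (dist (\<phi> x) (\<psi> x) + dist (\<phi> y) (\<psi> y))"
      using assms(3)[OF that(1,2)] abs_ge_self[of L]
      by (meson add_nonneg_nonneg mult_right_mono order_trans zero_le_dist)
    also have "\<dots> \<le> \<bar>L\<bar> * (2 * d)"
      using F(3)[OF that] by (intro mult_left_mono) auto
    finally show ?thesis using \<open>\<bar>L\<bar> * (2 * d) \<le> e\<close> by simp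
  qed
  then show "\<exists>F. finite F \<and> F \<subseteq> S \<and>
      (\<forall>\<phi>\<in>M. \<forall>\<psi>\<in>M. (\<forall>s\<in>F. \<phi> s = \<psi> s) \<longrightarrow> dist (\<phi> z) (\<psi> z) \<le> e)"
    using F(1,2) by blast
qed

lemma finitely_determined_add:
  assumes "x \<in> A" "y \<in> A"
    and "finitely_determined (multiplicative_functionals cs A) S x"
    and "finitely_determined (multiplicative_functionals cs A) S y"
  shows "finitely_determined (multiplicative_functionals cs A) S (x + y)"
  using assms(3,4)
proof (rule finitely_determined_lipschitz[where L = 1])
  fix \<phi> \<psi> assume "\<phi> \<in> multiplicative_functionals cs A" "\<psi> \<in> multiplicative_functionals cs A"
  then show "dist (\<phi> (x + y)) (\<psi> (x + y)) \<le> 1 * (dist (\<phi> x) (\<psi> x) + dist (\<phi> y) (\<psi> y))"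
    using assms(1,2) by (simp add: multiplicative_functionalsD(1) dist_triangle_add)
qed

lemma finitely_determined_cs:
  assumes "x \<in> A" "finitely_determined (multiplicative_functionals cs A) S x"
  shows "finitely_determined (multiplicative_functionals cs A) S (cs a x)"
  using assms(2,2)
proof (rule finitely_determined_lipschitz[where L = "cmod a"])
  fix \<phi> \<psi> assume "\<phi> \<in> multiplicative_functionals cs A" "\<psi> \<in> multiplicative_functionals cs A"
  then have "dist (\<phi> (cs a x)) (\<psi> (cs a x)) = cmod a * dist (\<phi> x) (\<psi> x)"
    using assms(1) by (simp add: multiplicative_functionalsD(3) dist_norm norm_mult
        flip: right_diff_distrib)
  then show "dist (\<phi> (cs a x)) (\<psi> (cs a x)) \<le> cmod a * (dist (\<phi> x) (\<psi> x) + dist (\<phi> x) (\<psi> x))"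
    by (simp add: mult_left_mono)
qed

subsection \<open>C*-algebras\<close>

lemma is_cstar_subalgebraD:
  assumes "is_cstar_subalgebra adj cs B"
  shows "closed B" and "0 \<in> B" and "x \<in> B \<Longrightarrow> y \<in> B \<Longrightarrow> x + y \<in> B"
    and "x \<in> B \<Longrightarrow> y \<in> B \<Longrightarrow> x * y \<in> B" and "x \<in> B \<Longrightarrow> cs a x \<in> B"
    and "x \<in> B \<Longrightarrow> adj x \<in> B"
  using assms unfolding is_cstar_subalgebra_def by blast+

lemma is_cstar_subalgebra_cstar_gen: "is_cstar_subalgebra adj cs (cstar_gen adj cs S)"
  unfolding cstar_gen_def is_cstar_subalgebra_def
  by (intro conjI closed_Inter) blast+

lemma cstar_gen_minimal:
  "is_cstar_subalgebra adj cs B \<Longrightarrow> S \<subseteq> B \<Longrightarrow> cstar_gen adj cs S \<subseteq> B"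
  unfolding cstar_gen_def by blast

lemma cstar_gen_superset: "S \<subseteq> cstar_gen adj cs S"
  unfolding cstar_gen_def by blast

locale cstar_algebra =
  fixes adj :: "'a::{real_normed_algebra,banach} \<Rightarrow> 'a"
    and cs :: "complex \<Rightarrow> 'a \<Rightarrow> 'a"
  assumes cstar_algebra: "is_cstar_algebra adj cs"
begin

lemma cs_of_real: "cs (complex_of_real r) x = r *\<^sub>R x"
  and norm_cs: "norm (cs a x) = cmod a * norm x"
  and adj_add: "adj (x + y) = adj x + adj y"
  and adj_cs: "adj (cs a x) = cs (cnj a) (adj x)"
  and adj_mult: "adj (x * y) = adj y * adj x"
  and adj_adj: "adj (adj x) = x"
  and cstar_identity: "norm (adj x * x) = (norm x)\<^sup>2"
  using cstar_algebra unfolding is_cstar_algebra_def by simp_all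

lemma adj_0: "adj 0 = 0"
  using adj_add[of 0 0] by simp

lemma adj_scaleR: "adj (r *\<^sub>R x) = r *\<^sub>R adj x"
  using adj_cs[of "complex_of_real r" x] by (simp add: cs_of_real)

lemma norm_adj: "norm (adj x) = norm x"
proof -
  have "norm x \<le> norm (adj x)" for x
  proof (cases "x = 0")
    case False
    have "norm x * norm x \<le> norm (adj x) * norm x"
      using cstar_identity[of x] norm_mult_ineq[of "adj x" x] by (simp add: power2_eq_square)
    then show ?thesis using False by simp
  qed simp
  from this[of x] this[of "adj x"] show ?thesis by (simp add: adj_adj)
qed

lemma isCont_adj: "isCont adj x"
proof -
  have "bounded_linear adj"
    by (rule bounded_linear_intro[where K = 1]) (auto simp: adj_add adj_scaleR norm_adj)
  then show ?thesis by (rule linear_continuous_at)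
qed

lemma cstar_subalgebra_scaleR: "is_cstar_subalgebra adj cs B \<Longrightarrow> x \<in> B \<Longrightarrow> r *\<^sub>R x \<in> B"
  using is_cstar_subalgebraD(5)[of adj cs B x "complex_of_real r"] by (simp add: cs_of_real)

lemma cstar_subalgebra_uminus: "is_cstar_subalgebra adj cs B \<Longrightarrow> x \<in> B \<Longrightarrow> - x \<in> B"
  using cstar_subalgebra_scaleR[of B x "-1"] by simp

lemma cstar_subalgebra_diff: "is_cstar_subalgebra adj cs B \<Longrightarrow> x \<in> B \<Longrightarrow> y \<in> B \<Longrightarrow> x - y \<in> B"
  using is_cstar_subalgebraD(3)[of adj cs B x "- y"] cstar_subalgebra_uminus[of B y] by simp

lemma cstar_subalgebra_sum:
  assumes "is_cstar_subalgebra adj cs B" "\<And>i. i \<in> F \<Longrightarrow> f i \<in> B"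
  shows "sum f F \<in> B"
  using assms(2)
proof (induction F rule: infinite_finite_induct)
  case (insert i F)
  then show ?case by (simp add: is_cstar_subalgebraD(3)[OF assms(1)])
qed (simp_all add: is_cstar_subalgebraD(2)[OF assms(1)])

lemma ring_gen_subset_cstar_gen: "ring_gen S \<subseteq> cstar_gen adj cs S"
proof (rule ring_gen_minimal)
  let ?A = "cstar_gen adj cs S"
  have A: "is_cstar_subalgebra adj cs ?A" by (rule is_cstar_subalgebra_cstar_gen)
  show "S \<subseteq> ?A" "0 \<in> ?A" by (rule cstar_gen_superset, rule is_cstar_subalgebraD(2)[OF A])
  show "x + y \<in> ?A" "x * y \<in> ?A" if "x \<in> ?A" "y \<in> ?A" for x y
    using that by (simp_all add: is_cstar_subalgebraD(3,4)[OF A])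
  show "- x \<in> ?A" if "x \<in> ?A" for x
    using that by (rule cstar_subalgebra_uminus[OF A])
qed

lemma multiplicative_functional_diff:
  assumes "is_cstar_subalgebra adj cs B" "\<phi> \<in> multiplicative_functionals cs B" "x \<in> B" "y \<in> B"
  shows "\<phi> (x - y) = \<phi> x - \<phi> y"
proof -
  have "\<phi> (- y) = - \<phi> y"
    using multiplicative_functionalsD(3)[OF assms(2,4), of "- 1"]
    by (simp add: cs_of_real[of "- 1", simplified])
  then show ?thesis
    using multiplicative_functionalsD(1)[OF assms(2,3) cstar_subalgebra_uminus[OF assms(1,4)]]
    by simp
qed

text \<open>If \<open>|\<phi> x| > \<parallel>x\<parallel>\<close>, then \<open>y = x / \<phi> x\<close> has norm \<open>< 1\<close> and \<open>\<phi> y = 1\<close>; the Neumann series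
  \<open>s = y + y\<^sup>2 + \<dots>\<close> converges in the closed algebra and satisfies \<open>s = y + y s\<close>, which \<open>\<phi>\<close>
  maps to the absurd \<open>\<phi> s = 1 + \<phi> s\<close>.\<close>
lemma multiplicative_functional_norm_le:
  assumes B: "is_cstar_subalgebra adj cs B"
    and \<phi>: "\<phi> \<in> multiplicative_functionals cs B" and x: "x \<in> B"
  shows "cmod (\<phi> x) \<le> norm x"
proof (rule ccontr)
  assume "\<not> ?thesis"
  then have lt: "norm x < cmod (\<phi> x)" and nz: "\<phi> x \<noteq> 0" by auto
  define y where "y = cs (1 / \<phi> x) x"
  have yB: "y \<in> B" unfolding y_def using x by (rule is_cstar_subalgebraD(5)[OF B])
  have \<phi>y: "\<phi> y = 1" unfolding y_def using multiplicative_functionalsD(3)[OF \<phi> x] nz by simp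
  have "norm y < 1" unfolding y_def norm_cs using lt nz by (simp add: norm_divide)
  define p where "p n = ((*) y ^^ n) y" for n
  have pB: "p n \<in> B" for n
    unfolding p_def using yB by (induction n) (simp_all add: is_cstar_subalgebraD(4)[OF B])
  have "norm (p n) \<le> norm y ^ Suc n" for n
  proof (induction n)
    case (Suc n)
    have "norm (p (Suc n)) \<le> norm y * norm (p n)" by (simp add: p_def norm_mult_ineq)
    also have "\<dots> \<le> norm y * norm y ^ Suc n" using Suc by (simp add: mult_left_mono)
    finally show ?case by simp
  qed (simp add: p_def)
  moreover have "summable (\<lambda>n. norm y ^ Suc n)"
    using \<open>norm y < 1\<close> by simp
  ultimately have sp: "summable p"
    by (intro summable_comparison_test[of p "\<lambda>n. norm y ^ Suc n"]) auto
  define s where "s = suminf p"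
  have "(\<Sum>i<n. p i) \<in> B" for n
    using pB by (intro cstar_subalgebra_sum[OF B])
  moreover have "(\<lambda>n. \<Sum>i<n. p i) \<longlonglongrightarrow> s" unfolding s_def using sp by (rule summable_LIMSEQ)
  ultimately have sB: "s \<in> B"
    by (rule closed_sequentially[OF is_cstar_subalgebraD(1)[OF B]])
  have "y * s = (\<Sum>n. p (Suc n))"
    unfolding s_def using suminf_mult[OF sp, of y] by (simp add: p_def)
  also have "\<dots> = s - y"
    unfolding s_def using suminf_split_head[OF sp] by (simp add: p_def)
  finally have "s = y + y * s" by simp
  then have "\<phi> s = \<phi> (y + y * s)" by (rule arg_cong)
  also have "\<dots> = \<phi> y + \<phi> y * \<phi> s"
    using multiplicative_functionalsD(1,2)[OF \<phi>] yB sB is_cstar_subalgebraD(4)[OF B yB sB]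
    by simp
  finally show False using \<phi>y by simp
qed

lemma multiplicative_functional_dist_le:
  assumes "is_cstar_subalgebra adj cs B" "\<phi> \<in> multiplicative_functionals cs B" "x \<in> B" "y \<in> B"
  shows "dist (\<phi> x) (\<phi> y) \<le> dist x y"
  using multiplicative_functional_norm_le[OF assms(1,2) cstar_subalgebra_diff[OF assms(1,3,4)]]
    multiplicative_functional_diff[OF assms]
  by (simp add: dist_norm)

lemma compact_multiplicative_functionals:
  assumes "is_cstar_subalgebra adj cs B"
  shows "compact (multiplicative_functionals cs B)"
proof -
  define C where "C = (\<Pi>\<^sub>E y\<in>UNIV. cball (0::complex) (norm (y::'a)))"
  have "compactin (product_topology (\<lambda>_. euclidean) UNIV) C"
    unfolding C_def by (subst compactin_PiE) auto
  then have "compact C" by (simp add: euclidean_product_topology)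
  moreover have "multiplicative_functionals cs B \<subseteq> C"
    using multiplicative_functional_norm_le[OF assms] multiplicative_functionalsD(4)
    unfolding C_def by (fastforce simp: PiE_iff)
  ultimately show ?thesis
    using closed_multiplicative_functionals compact_Int_closed by (metis inf.absorb_iff2)
qed

lemma compact_gelfand_superlevel_set:
  assumes "is_cstar_subalgebra adj cs B" "x \<in> B" "e > 0"
  shows "compact {\<phi> \<in> characters cs B. e \<le> norm (gelfand (characters cs B) x \<phi>)}"
proof -
  have "{\<phi> \<in> characters cs B. e \<le> norm (gelfand (characters cs B) x \<phi>)} =
      multiplicative_functionals cs B \<inter> {\<phi>. e \<le> norm (\<phi> x)}"
    using assms(2,3) unfolding characters_eq gelfand_def by force
  moreover have "closed {\<phi> :: 'a \<Rightarrow> complex. e \<le> norm (\<phi> x)}"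
    by (intro closed_Collect_le continuous_intros continuous_on_product_coordinates)
  ultimately show ?thesis
    using compact_multiplicative_functionals[OF assms(1)] by (simp add: compact_Int_closed)
qed

lemma finitely_determined_mult:
  assumes B: "is_cstar_subalgebra adj cs B" and "x \<in> B" "y \<in> B"
    and "finitely_determined (multiplicative_functionals cs B) S x"
    and "finitely_determined (multiplicative_functionals cs B) S y"
  shows "finitely_determined (multiplicative_functionals cs B) S (x * y)"
  using assms(4,5)
proof (rule finitely_determined_lipschitz[where L = "norm x + norm y"])
  fix \<phi> \<psi> assume \<phi>: "\<phi> \<in> multiplicative_functionals cs B" and \<psi>: "\<psi> \<in> multiplicative_functionals cs B"
  have "\<phi> (x * y) - \<psi> (x * y) = \<phi> x * (\<phi> y - \<psi> y) + (\<phi> x - \<psi> x) * \<psi> y"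
    using multiplicative_functionalsD(2)[OF \<phi>] multiplicative_functionalsD(2)[OF \<psi>] assms(2,3)
    by (simp add: algebra_simps)
  then have "dist (\<phi> (x * y)) (\<psi> (x * y)) \<le>
      cmod (\<phi> x) * dist (\<phi> y) (\<psi> y) + dist (\<phi> x) (\<psi> x) * cmod (\<psi> y)"
    by (metis dist_norm norm_mult norm_triangle_ineq)
  also have "\<dots> \<le> norm x * dist (\<phi> y) (\<psi> y) + dist (\<phi> x) (\<psi> x) * norm y"
    using multiplicative_functional_norm_le[OF B] \<phi> \<psi> assms(2,3)
    by (intro add_mono mult_mono) auto
  also have "\<dots> \<le> (norm x + norm y) * (dist (\<phi> x) (\<psi> x) + dist (\<phi> y) (\<psi> y))"
    by (simp add: algebra_simps)
  finally show "dist (\<phi> (x * y)) (\<psi> (x * y)) \<le>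
      (norm x + norm y) * (dist (\<phi> x) (\<psi> x) + dist (\<phi> y) (\<psi> y))" .
qed

lemma closed_finitely_determined:
  assumes B: "is_cstar_subalgebra adj cs B"
  shows "closed {x \<in> B. finitely_determined (multiplicative_functionals cs B) S x}"
  unfolding closed_sequential_limits
proof (intro allI impI, elim conjE)
  let ?M = "multiplicative_functionals cs B"
  fix u l assume u: "\<forall>n. u n \<in> {x \<in> B. finitely_determined ?M S x}" and "u \<longlonglongrightarrow> l"
  then have lB: "l \<in> B"
    using closed_sequentially[OF is_cstar_subalgebraD(1)[OF B]] by blast
  have "finitely_determined ?M S l"
    unfolding finitely_determined_def
  proof (intro allI impI)
    fix e :: real assume "e > 0"
    then have "eventually (\<lambda>n. dist (u n) l < e / 3) sequentially"
      using \<open>u \<longlonglongrightarrow> l\<close> by (intro tendstoD) auto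
    then obtain n where n: "dist (u n) l < e / 3"
      unfolding eventually_sequentially by blast
    have "u n \<in> B" "finitely_determined ?M S (u n)" using u by blast+
    moreover have "e / 3 > 0" using \<open>e > 0\<close> by simp
    ultimately obtain F where F: "finite F" "F \<subseteq> S"
      "\<And>\<phi> \<psi>. \<phi> \<in> ?M \<Longrightarrow> \<psi> \<in> ?M \<Longrightarrow> \<forall>s\<in>F. \<phi> s = \<psi> s \<Longrightarrow> dist (\<phi> (u n)) (\<psi> (u n)) \<le> e / 3"
      using finitely_determinedD by metis
    have "dist (\<phi> l) (\<psi> l) \<le> e" if "\<phi> \<in> ?M" "\<psi> \<in> ?M" "\<forall>s\<in>F. \<phi> s = \<psi> s" for \<phi> \<psi>
    proof -
      have "dist (\<phi> l) (\<phi> (u n)) \<le> dist l (u n)" "dist (\<psi> (u n)) (\<psi> l) \<le> dist (u n) l"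
        using multiplicative_functional_dist_le[OF B that(1) lB \<open>u n \<in> B\<close>]
          multiplicative_functional_dist_le[OF B that(2) \<open>u n \<in> B\<close> lB] by simp_all
      with n have "dist (\<phi> l) (\<phi> (u n)) \<le> e / 3" "dist (\<psi> (u n)) (\<psi> l) \<le> e / 3"
        by (simp_all add: dist_commute)
      then show ?thesis
        using F(3)[OF that] dist_triangle[of "\<phi> l" "\<psi> l" "\<phi> (u n)"]
          dist_triangle[of "\<phi> (u n)" "\<psi> l" "\<psi> (u n)"] by linarith
    qed
    then show "\<exists>F. finite F \<and> F \<subseteq> S \<and>
        (\<forall>\<phi>\<in>?M. \<forall>\<psi>\<in>?M. (\<forall>s\<in>F. \<phi> s = \<psi> s) \<longrightarrow> dist (\<phi> l) (\<psi> l) \<le> e)"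
      using F(1,2) by blast
  qed
  with lB show "l \<in> {x \<in> B. finitely_determined ?M S x}" by blast
qed

lemma cstar_subalgebra_finitely_determined:
  fixes S :: "'a set"
  assumes B: "is_cstar_subalgebra adj cs B"
  defines "D \<equiv> {x \<in> B. finitely_determined (multiplicative_functionals cs B) S x}"
  shows "is_cstar_subalgebra adj cs (D \<inter> adj -` D)"
  unfolding is_cstar_subalgebra_def
proof (intro conjI ballI allI)
  show "closed (D \<inter> adj -` D)"
    unfolding D_def using closed_finitely_determined[OF B]
    by (intro closed_Int continuous_closed_vimage isCont_adj)
  have "finitely_determined (multiplicative_functionals cs B) S 0"
    unfolding finitely_determined_def
    by (auto intro!: exI[of _ "{}"] simp: multiplicative_functional_0 is_cstar_subalgebraD(2)[OF B])
  then show "0 \<in> D \<inter> adj -` D"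
    unfolding D_def using is_cstar_subalgebraD(2)[OF B] by (simp add: adj_0)
next
  fix x y assume "x \<in> D \<inter> adj -` D" "y \<in> D \<inter> adj -` D"
  then show "x + y \<in> D \<inter> adj -` D" "x * y \<in> D \<inter> adj -` D"
    unfolding D_def
    by (auto simp: adj_add adj_mult is_cstar_subalgebraD(3,4)[OF B]
        intro: finitely_determined_add finitely_determined_mult[OF B])
next
  fix a x assume "x \<in> D \<inter> adj -` D"
  then show "cs a x \<in> D \<inter> adj -` D"
    unfolding D_def by (auto simp: adj_cs is_cstar_subalgebraD(5)[OF B] intro: finitely_determined_cs)
next
  fix x assume "x \<in> D \<inter> adj -` D"
  then show "adj x \<in> D \<inter> adj -` D"
    unfolding D_def by (simp add: adj_adj)
qed

lemma cstar_gen_finitely_determined: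
  assumes "adj ` S \<subseteq> S" "x \<in> cstar_gen adj cs S"
  shows "finitely_determined (multiplicative_functionals cs (cstar_gen adj cs S)) S x"
proof -
  let ?A = "cstar_gen adj cs S"
  let ?D = "{x \<in> ?A. finitely_determined (multiplicative_functionals cs ?A) S x}"
  have "S \<subseteq> ?D \<inter> adj -` ?D"
    using assms(1) cstar_gen_superset[of S adj cs] by (auto intro: finitely_determined_generator)
  then have "?A \<subseteq> ?D \<inter> adj -` ?D"
    by (intro cstar_gen_minimal cstar_subalgebra_finitely_determined is_cstar_subalgebra_cstar_gen)
  then show ?thesis using assms(2) by blast
qed

lemma multiplicative_functionals_coordinate_nhds:
  assumes "adj ` S \<subseteq> S"
    and \<phi>: "\<phi> \<in> multiplicative_functionals cs (cstar_gen adj cs S)" and "open V" "\<phi> y \<in> V"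
  shows "\<exists>F. finite F \<and> F \<subseteq> S \<and>
    (\<forall>\<psi>\<in>multiplicative_functionals cs (cstar_gen adj cs S). (\<forall>s\<in>F. \<psi> s = \<phi> s) \<longrightarrow> \<psi> y \<in> V)"
proof (cases "y \<in> cstar_gen adj cs S")
  case True
  obtain r where "r > 0" "ball (\<phi> y) r \<subseteq> V"
    using \<open>open V\<close> \<open>\<phi> y \<in> V\<close> open_contains_ball by blast
  obtain F where "finite F" "F \<subseteq> S"
    and F: "\<And>\<phi> \<psi>. \<phi> \<in> multiplicative_functionals cs (cstar_gen adj cs S) \<Longrightarrow>
      \<psi> \<in> multiplicative_functionals cs (cstar_gen adj cs S) \<Longrightarrow> \<forall>s\<in>F. \<phi> s = \<psi> s \<Longrightarrow>
      dist (\<phi> y) (\<psi> y) \<le> r / 2"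
    using cstar_gen_finitely_determined[OF assms(1) True] half_gt_zero[OF \<open>r > 0\<close>]
    by (rule finitely_determinedD) auto
  have "\<psi> y \<in> V"
    if "\<psi> \<in> multiplicative_functionals cs (cstar_gen adj cs S)" "\<forall>s\<in>F. \<psi> s = \<phi> s" for \<psi>
  proof -
    have "\<forall>s\<in>F. \<phi> s = \<psi> s" using that(2) by simp
    then have "dist (\<phi> y) (\<psi> y) < r" using F[OF \<phi> that(1)] \<open>r > 0\<close> by linarith
    then show ?thesis using \<open>ball (\<phi> y) r \<subseteq> V\<close> by auto
  qed
  with \<open>finite F\<close> \<open>F \<subseteq> S\<close> show ?thesis by blast
next
  case False
  then have "\<psi> y = \<phi> y" if "\<psi> \<in> multiplicative_functionals cs (cstar_gen adj cs S)" for \<psi>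
    using multiplicative_functionalsD(4)[OF that False] multiplicative_functionalsD(4)[OF \<phi> False]
    by simp
  then show ?thesis
    using \<open>\<phi> y \<in> V\<close> by (intro exI[of _ "{}"]) auto
qed

lemma multiplicative_functionals_nhds:
  assumes "adj ` S \<subseteq> S"
    and \<phi>: "\<phi> \<in> multiplicative_functionals cs (cstar_gen adj cs S)" and "open T" "\<phi> \<in> T"
  shows "\<exists>F. finite F \<and> F \<subseteq> S \<and>
    {\<psi> \<in> multiplicative_functionals cs (cstar_gen adj cs S). \<forall>s\<in>F. \<psi> s = \<phi> s} \<subseteq> T"
proof -
  let ?M = "multiplicative_functionals cs (cstar_gen adj cs S)"
  obtain V where V: "\<phi> \<in> (\<Pi>\<^sub>E y\<in>UNIV. V y)" "\<And>y. open (V y)" "finite {y. V y \<noteq> UNIV}"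
    "(\<Pi>\<^sub>E y\<in>UNIV. V y) \<subseteq> T"
    using product_topology_open_contains_basis[of "\<lambda>_. euclidean" UNIV T \<phi>] \<open>open T\<close> \<open>\<phi> \<in> T\<close>
    unfolding open_fun_def by auto
  define J where "J = {y. V y \<noteq> UNIV}"
  have "\<forall>y\<in>J. \<exists>F. finite F \<and> F \<subseteq> S \<and> (\<forall>\<psi>\<in>?M. (\<forall>s\<in>F. \<psi> s = \<phi> s) \<longrightarrow> \<psi> y \<in> V y)"
    using multiplicative_functionals_coordinate_nhds[OF assms(1) \<phi> V(2)] V(1) by (auto simp: PiE_iff)
  then obtain G where G: "\<And>y. y \<in> J \<Longrightarrow>
      finite (G y) \<and> G y \<subseteq> S \<and> (\<forall>\<psi>\<in>?M. (\<forall>s\<in>G y. \<psi> s = \<phi> s) \<longrightarrow> \<psi> y \<in> V y)"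
    by metis
  have "{\<psi> \<in> ?M. \<forall>s\<in>\<Union>(G ` J). \<psi> s = \<phi> s} \<subseteq> (\<Pi>\<^sub>E y\<in>UNIV. V y)"
    using G unfolding J_def by (fastforce simp: PiE_iff)
  then show ?thesis
    using G V(3,4) unfolding J_def[symmetric] by (intro exI[of _ "\<Union>(G ` J)"]) auto
qed

lemma character_nonzero_on_generators:
  assumes "adj ` S \<subseteq> S" "\<phi> \<in> characters cs (cstar_gen adj cs S)"
  shows "\<exists>s\<in>S. \<phi> s \<noteq> 0"
proof (rule ccontr)
  assume vanishing: "\<not> ?thesis"
  let ?M = "multiplicative_functionals cs (cstar_gen adj cs S)"
  obtain x where x: "x \<in> cstar_gen adj cs S" "\<phi> x \<noteq> 0" and "\<phi> \<in> ?M"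
    using assms(2) unfolding characters_eq by blast
  then obtain F where "F \<subseteq> S"
    "\<And>\<psi>. \<psi> \<in> ?M \<Longrightarrow> \<forall>s\<in>F. \<phi> s = \<psi> s \<Longrightarrow> dist (\<phi> x) (\<psi> x) \<le> cmod (\<phi> x) / 2"
    using finitely_determinedD[OF cstar_gen_finitely_determined[OF assms(1) x(1)], of "cmod (\<phi> x) / 2"]
    by (metis half_gt_zero zero_less_norm_iff)
  then have "dist (\<phi> x) 0 \<le> cmod (\<phi> x) / 2"
    using vanishing zero_in_multiplicative_functionals by fastforce
  then show False using x(2) by simp
qed

end

locale cstar_projections = cstar_algebra +
  fixes P
  assumes projections: "\<forall>p\<in>P. is_projection adj p"
begin

abbreviation \<A> where "\<A> \<equiv> cstar_gen adj cs P"
abbreviation \<X> where "\<X> \<equiv> characters cs \<A>"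

definition proj_support :: "'a \<Rightarrow> ('a \<Rightarrow> complex) set" where
  "proj_support p = {\<phi> \<in> \<X>. \<phi> p = 1}"

lemma projections_self_adjoint: "adj ` P \<subseteq> P"
  and projections_subset: "P \<subseteq> \<A>"
  and projection_idem: "p \<in> P \<Longrightarrow> p * p = p"
  using projections cstar_gen_superset[of P adj cs] unfolding is_projection_def by auto

lemma character_projection_cases: "\<phi> \<in> \<X> \<Longrightarrow> p \<in> P \<Longrightarrow> \<phi> p = 0 \<or> \<phi> p = 1"
  using multiplicative_functional_idempotent projections_subset projection_idem
  unfolding characters_eq by blast

lemma gelfand_ring_gen_projections:
  "gelfand \<X> ` ring_gen P = ring_gen (indicator ` proj_support ` P)"
proof -
  have "gelfand \<X> ` ring_gen P = ring_gen (gelfand \<X> ` P)"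
    using gelfand_add_mult[of _ \<A>] by (intro ring_gen_image[OF ring_gen_subset_cstar_gen]) auto
  also have "gelfand \<X> ` P = indicator ` proj_support ` P"
    unfolding image_image proj_support_def
    using gelfand_idempotent[of _ \<A> cs] projections_subset projection_idem
    by (intro image_cong) auto
  finally show ?thesis .
qed

lemma gelfand_ring_gen_subset_C0_int: "gelfand \<X> ` ring_gen P \<subseteq> C0_int \<X>"
proof (rule image_subsetI)
  fix r assume r: "r \<in> ring_gen P"
  then have "r \<in> \<A>" using ring_gen_subset_cstar_gen by blast
  then have "compact {\<phi> \<in> \<X>. e \<le> norm (gelfand \<X> r \<phi>)}" if "e > 0" for e
    using compact_gelfand_superlevel_set[OF is_cstar_subalgebra_cstar_gen _ that] by blast
  moreover have "gelfand \<X> r \<in> ring_gen (indicator ` proj_support ` P)"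
    using imageI[OF r, of "gelfand \<X>"] by (simp only: gelfand_ring_gen_projections)
  then have "gelfand \<X> r \<phi> \<in> \<int>" for \<phi>
    by (rule ring_gen_indicator_Ints)
  moreover have "gelfand \<X> r \<phi> = 0" if "\<phi> \<notin> \<X>" for \<phi>
    using that unfolding gelfand_def by simp
  ultimately show "gelfand \<X> r \<in> C0_int \<X>"
    unfolding C0_int_def by (simp add: continuous_on_gelfand)
qed

lemma clopen_proj_support:
  assumes "p \<in> P"
  shows "openin (top_of_set \<X>) (proj_support p) \<and> closedin (top_of_set \<X>) (proj_support p)"
  using openin_characters_idempotent[of p \<A> cs] closedin_characters_idempotent[of p \<A> cs]
    assms projections_subset projection_idem
  unfolding proj_support_def by auto

lemma characters_subset_proj_supports: "\<X> \<subseteq> \<Union>(proj_support ` P)"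
proof
  fix \<phi> assume "\<phi> \<in> \<X>"
  then obtain p where "p \<in> P" "\<phi> p \<noteq> 0"
    using character_nonzero_on_generators[OF projections_self_adjoint] by blast
  then show "\<phi> \<in> \<Union>(proj_support ` P)"
    using character_projection_cases[OF \<open>\<phi> \<in> \<X>\<close>] \<open>\<phi> \<in> \<X>\<close> unfolding proj_support_def by auto
qed

lemma characters_nhds_cylinder:
  assumes "\<phi> \<in> \<X>" "open T" "\<phi> \<in> T"
  shows "\<exists>F. finite F \<and> F \<subseteq> proj_support ` P \<and> cylinder \<X> F {V. \<phi> \<in> V} \<subseteq> T"
proof -
  have M: "\<psi> \<in> multiplicative_functionals cs \<A>" if "\<psi> \<in> \<X>" for \<psi>
    using that unfolding characters_eq by blast
  obtain F where F: "finite F" "F \<subseteq> P"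
    "{\<psi> \<in> multiplicative_functionals cs \<A>. \<forall>p\<in>F. \<psi> p = \<phi> p} \<subseteq> T"
    using multiplicative_functionals_nhds[OF projections_self_adjoint M[OF assms(1)] assms(2,3)]
    by blast
  have "cylinder \<X> (proj_support ` F) {V. \<phi> \<in> V} \<subseteq> T"
  proof
    fix \<psi> assume "\<psi> \<in> cylinder \<X> (proj_support ` F) {V. \<phi> \<in> V}"
    then have "\<psi> \<in> \<X>" and iff: "\<And>p. p \<in> F \<Longrightarrow> \<psi> p = 1 \<longleftrightarrow> \<phi> p = 1"
      unfolding cylinder_def proj_support_def using assms(1) by auto
    have "\<psi> p = \<phi> p" if "p \<in> F" for p
      using iff[OF that] character_projection_cases[OF \<open>\<psi> \<in> \<X>\<close>, of p]
        character_projection_cases[OF assms(1), of p] F(2) that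
      by auto
    then show "\<psi> \<in> T"
      using F(3) M[OF \<open>\<psi> \<in> \<X>\<close>] by blast
  qed
  then show ?thesis
    using F(1,2) by blast
qed

theorem C0_int_eq_gelfand_ring_gen: "C0_int \<X> = gelfand \<X> ` ring_gen P"
proof
  have "C0_int \<X> \<subseteq> ring_gen (indicator ` proj_support ` P)"
    using clopen_proj_support characters_subset_proj_supports characters_nhds_cylinder
    by (intro C0_int_subset_ring_gen_indicator) auto
  then show "C0_int \<X> \<subseteq> gelfand \<X> ` ring_gen P"
    by (simp only: gelfand_ring_gen_projections)
qed (rule gelfand_ring_gen_subset_C0_int)

end

theorem lemma4p3:
  fixes adj :: "'a::{real_normed_algebra,banach} \<Rightarrow> 'a"
    and cs :: "complex \<Rightarrow> 'a \<Rightarrow> 'a"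
    and E :: "'i \<Rightarrow> 'a" and \<Lambda> :: "'i set"
  assumes "is_cstar_algebra adj cs"
    and "\<forall>i\<in>\<Lambda>. is_projection adj (E i)"
    and "\<forall>i\<in>\<Lambda>. \<forall>j\<in>\<Lambda>. E i * E j = E j * E i"
  defines "A \<equiv> cstar_gen adj cs (E ` \<Lambda>)"
  defines "X \<equiv> characters cs A"
  shows "C0_int X = gelfand X ` ring_gen (E ` \<Lambda>)
     \<and> ((\<forall>i\<in>\<Lambda>. \<forall>j\<in>\<Lambda>. \<exists>k\<in>\<Lambda>. E i * E j = E k)
          \<longrightarrow> C0_int X = gelfand X ` int_span E \<Lambda>)"
proof -
  interpret cstar_projections adj cs "E ` \<Lambda>"
    using assms(1,2) by unfold_locales auto
  have "C0_int X = gelfand X ` ring_gen (E ` \<Lambda>)"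
    unfolding X_def A_def by (rule C0_int_eq_gelfand_ring_gen)
  then show ?thesis
    using ring_gen_eq_int_span[of \<Lambda> E] by simp
qed

end
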